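(* Let $f$ be a formula with $m$ clauses over $n$ variables, each clause being a CNF, cardinality, XOR or NAE constraint, and let $F=\sum_c\mathrm{FE}_c$, a multilinear polynomial on $[-1,1]^n$ with values in $[-m,m]$. Run projected gradient descent with step size $\eta=\frac{1}{nm}$ from any starting point $x_0\in[-1,1]^n$: $$x_{t+1}=\Pi_{[-1,1]^n}\big(x_t-\eta\nabla F(x_t)\big)=x_t-\eta G(x_t).$$ Then within $O\big(\frac{nm^2}{\epsilon^2}\big)$ iterations it reaches an $\epsilon$-projected-critical point, i.e. an iterate $x_t$ with $\|G(x_t)\|_2<\epsilon$.
   Context: Boolean values are encoded as $\pm1$, with $-1$ standing for True. $\mathrm{FE}_c$ is the Fourier expansion of clause $c$, i.e. the unique multilinear polynomial agreeing with $c$ (as a $\{\pm1\}$-valued function) on $\{\pm1\}^n$. $\Pi_{[-1,1]^n}(y)=\arg\min_{x\in[-1,1]^n}\tfrac12\|x-y\|_2^2$ is the Euclidean projection onto the cube. The gradient mapping is $G(x)=\frac1\eta\big(x-\Pi_{[-1,1]^n}(x-\eta\nabla F(x))\big)$. *)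

theory Defs
  imports "HOL-Analysis.Analysis"
begin

(* Vectors in R^n are represented as functions nat => real, with coordinates
   0..n-1 meaningful and all other coordinates equal to 0. *)

type_synonym lit = "nat \<times> bool"   (* (variable, polarity); True = positive literal *)

datatype clause =
    CNF "lit list"
  | Card "lit list" nat
  | XOR "lit list"
  | NAE "lit list"

fun clause_lits :: "clause \<Rightarrow> lit list" where
  "clause_lits (CNF ls) = ls"
| "clause_lits (Card ls k) = ls"
| "clause_lits (XOR ls) = ls"
| "clause_lits (NAE ls) = ls"

definition clause_vars :: "clause \<Rightarrow> nat set" where
  "clause_vars c = fst ` set (clause_lits c)"

(* +-1 encoding: -1 stands for True *)
definition lit_val :: "(nat \<Rightarrow> real) \<Rightarrow> lit \<Rightarrow> bool" where
  "lit_val y l = (if snd l then y (fst l) = -1 else y (fst l) \<noteq> -1)"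

fun sat :: "(nat \<Rightarrow> real) \<Rightarrow> clause \<Rightarrow> bool" where
  "sat y (CNF ls) = (\<exists>l\<in>set ls. lit_val y l)"
| "sat y (Card ls k) = (k \<le> length (filter (lit_val y) ls))"
| "sat y (XOR ls) = odd (length (filter (lit_val y) ls))"
| "sat y (NAE ls) = ((\<exists>l\<in>set ls. lit_val y l) \<and> (\<exists>l\<in>set ls. \<not> lit_val y l))"

definition cval :: "clause \<Rightarrow> (nat \<Rightarrow> real) \<Rightarrow> real" where
  "cval c y = (if sat y c then -1 else 1)"

definition pt :: "nat \<Rightarrow> nat set \<Rightarrow> nat \<Rightarrow> real" where
  "pt n B = (\<lambda>i. if i \<in> B then -1 else if i < n then 1 else 0)"

definition fcoef :: "nat \<Rightarrow> clause \<Rightarrow> nat set \<Rightarrow> real" where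
  "fcoef n c S = (1 / 2 ^ n) * (\<Sum>B\<in>Pow {..<n}. cval c (pt n B) * (\<Prod>i\<in>S. pt n B i))"

definition FE :: "nat \<Rightarrow> clause \<Rightarrow> (nat \<Rightarrow> real) \<Rightarrow> real" where
  "FE n c x = (\<Sum>S\<in>Pow {..<n}. fcoef n c S * (\<Prod>i\<in>S. x i))"

definition Fsum :: "nat \<Rightarrow> clause list \<Rightarrow> (nat \<Rightarrow> real) \<Rightarrow> real" where
  "Fsum n f x = (\<Sum>c\<leftarrow>f. FE n c x)"

definition cube :: "nat \<Rightarrow> (nat \<Rightarrow> real) set" where
  "cube n = {x. (\<forall>i<n. -1 \<le> x i \<and> x i \<le> 1) \<and> (\<forall>i. n \<le> i \<longrightarrow> x i = 0)}"

definition vnorm :: "nat \<Rightarrow> (nat \<Rightarrow> real) \<Rightarrow> real" where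
  "vnorm n v = sqrt (\<Sum>i<n. (v i)\<^sup>2)"

definition grad :: "nat \<Rightarrow> ((nat \<Rightarrow> real) \<Rightarrow> real) \<Rightarrow> (nat \<Rightarrow> real) \<Rightarrow> nat \<Rightarrow> real" where
  "grad n F x = (\<lambda>i. if i < n then deriv (\<lambda>s. F (x(i := s))) (x i) else 0)"

definition proj :: "nat \<Rightarrow> (nat \<Rightarrow> real) \<Rightarrow> nat \<Rightarrow> real" where
  "proj n y = (THE x. x \<in> cube n \<and>
      (\<forall>z\<in>cube n. (1/2) * (vnorm n (\<lambda>i. x i - y i))\<^sup>2 \<le> (1/2) * (vnorm n (\<lambda>i. z i - y i))\<^sup>2))"

definition gmap :: "nat \<Rightarrow> real \<Rightarrow> ((nat \<Rightarrow> real) \<Rightarrow> real) \<Rightarrow> (nat \<Rightarrow> real) \<Rightarrow> nat \<Rightarrow> real" where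
  "gmap n \<eta> F x = (\<lambda>i. (1 / \<eta>) * (x i - proj n (\<lambda>j. x j - \<eta> * grad n F x j) i))"

definition pgd :: "nat \<Rightarrow> real \<Rightarrow> ((nat \<Rightarrow> real) \<Rightarrow> real) \<Rightarrow> (nat \<Rightarrow> real) \<Rightarrow> nat \<Rightarrow> nat \<Rightarrow> real" where
  "pgd n \<eta> F x0 t = ((\<lambda>x. proj n (\<lambda>j. x j - \<eta> * grad n F x j)) ^^ t) x0"

end

(*
  On the cube the Euclidean projection is coordinatewise clipping, and clipping satisfies the
  variational inequality of the projection. Combined with a quadratic upper bound
    F y <= F x + <grad F x, y - x> + |y - x|^2 / (2 eta)
  this yields the sufficient decrease F x_{t+1} <= F x_t - (eta/2) |G x_t|^2 of every step.
  For F = sum_c FE_c the bound holds with 1/eta = nm: F is the multilinear interpolation of its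
  vertex values, which lie in [-m, m], so each mixed second partial derivative of F is bounded
  by m on the cube. Since F itself takes values in [-m, m], the decrease can exceed
  (eta/2) eps^2 at most 4m / (eta eps^2) = 4nm^2/eps^2 times in a row.
*)

theory Submission
  imports Defs
begin

definition clip :: "nat \<Rightarrow> (nat \<Rightarrow> real) \<Rightarrow> nat \<Rightarrow> real" where
  "clip n v = (\<lambda>i. if i < n then max (-1) (min 1 (v i)) else 0)"

lemma cube_abs_le: "x \<in> cube n \<Longrightarrow> i < n \<Longrightarrow> \<bar>x i\<bar> \<le> 1"
  unfolding cube_def by auto

lemma clip_in_cube: "clip n v \<in> cube n"
  unfolding clip_def cube_def by auto

lemma clip_variational_ineq:
  fixes a v :: real
  assumes "\<bar>a\<bar> \<le> 1"
  shows "(a - max (-1) (min 1 v)) * (max (-1) (min 1 v) - v) \<ge> 0"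
  using assms by (cases "v > 1"; cases "v < -1") (auto simp: mult_nonpos_nonpos)

lemma clip_sq_dist_le:
  fixes a v :: real
  assumes "\<bar>a\<bar> \<le> 1"
  shows "(max (-1) (min 1 v) - v)\<^sup>2 + (a - max (-1) (min 1 v))\<^sup>2 \<le> (a - v)\<^sup>2"
proof -
  define c where "c = max (-1) (min 1 v)"
  have "(a - v)\<^sup>2 = (c - v)\<^sup>2 + (a - c)\<^sup>2 + 2 * ((a - c) * (c - v))"
    by (simp add: power2_eq_square algebra_simps)
  with clip_variational_ineq[OF assms, of v] show ?thesis
    unfolding c_def by linarith
qed

lemma vnorm_sq: "(vnorm n w)\<^sup>2 = (\<Sum>i<n. (w i)\<^sup>2)"
  unfolding vnorm_def by (simp add: sum_nonneg)

lemma proj_eq_clip: "proj n v = clip n v"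
  unfolding proj_def
proof (rule the_equality)
  have pythagoras: "(\<Sum>i<n. (clip n v i - v i)\<^sup>2) + (\<Sum>i<n. (z i - clip n v i)\<^sup>2) \<le> (\<Sum>i<n. (z i - v i)\<^sup>2)"
    if "z \<in> cube n" for z
    unfolding sum.distrib[symmetric]
    by (rule sum_mono) (use that in \<open>auto simp: clip_def cube_abs_le clip_sq_dist_le\<close>)
  show "clip n v \<in> cube n \<and> (\<forall>z\<in>cube n. 1/2 * (vnorm n (\<lambda>i. clip n v i - v i))\<^sup>2 \<le> 1/2 * (vnorm n (\<lambda>i. z i - v i))\<^sup>2)"
  proof (intro conjI ballI clip_in_cube)
    fix z
    assume "z \<in> cube n"
    with pythagoras[of z] sum_nonneg[of "{..<n}" "\<lambda>i. (z i - clip n v i)\<^sup>2"]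
    show "1/2 * (vnorm n (\<lambda>i. clip n v i - v i))\<^sup>2 \<le> 1/2 * (vnorm n (\<lambda>i. z i - v i))\<^sup>2"
      by (simp add: vnorm_sq)
  qed
  fix x
  assume x: "x \<in> cube n \<and> (\<forall>z\<in>cube n. 1/2 * (vnorm n (\<lambda>i. x i - v i))\<^sup>2 \<le> 1/2 * (vnorm n (\<lambda>i. z i - v i))\<^sup>2)"
  then have "(\<Sum>i<n. (x i - v i)\<^sup>2) \<le> (\<Sum>i<n. (clip n v i - v i)\<^sup>2)"
    using clip_in_cube[of n v] by (auto simp: vnorm_sq)
  with pythagoras[of x] x have "(\<Sum>i<n. (x i - clip n v i)\<^sup>2) \<le> 0"
    by simp
  then have "\<forall>i<n. x i = clip n v i"
    using sum_nonneg_eq_0_iff[of "{..<n}" "\<lambda>i. (x i - clip n v i)\<^sup>2"]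
    by (simp add: antisym sum_nonneg)
  with x show "x = clip n v"
    unfolding cube_def clip_def by (auto simp: fun_eq_iff)
qed

lemma pgd_Suc:
  "pgd n \<eta> F x0 (Suc t) = proj n (\<lambda>j. pgd n \<eta> F x0 t j - \<eta> * grad n F (pgd n \<eta> F x0 t) j)"
  unfolding pgd_def by simp

lemma pgd_in_cube: "x0 \<in> cube n \<Longrightarrow> pgd n \<eta> F x0 t \<in> cube n"
  by (cases t) (simp_all add: pgd_def proj_eq_clip clip_in_cube)

lemma pgd_step_decrease:
  fixes F :: "(nat \<Rightarrow> real) \<Rightarrow> real"
  assumes "\<eta> > 0" and x: "x \<in> cube n"
    and quadratic_bound: "\<And>y. y \<in> cube n \<Longrightarrow>
      F y \<le> F x + (\<Sum>k<n. grad n F x k * (y k - x k)) + 1 / (2 * \<eta>) * (\<Sum>k<n. (y k - x k)\<^sup>2)"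
  shows "F (proj n (\<lambda>j. x j - \<eta> * grad n F x j)) \<le> F x - \<eta> / 2 * (vnorm n (gmap n \<eta> F x))\<^sup>2"
proof -
  define g where "g = grad n F x"
  define y where "y = proj n (\<lambda>j. x j - \<eta> * g j)"
  define S where "S = (\<Sum>k<n. (y k - x k)\<^sup>2)"
  have y_clip: "y k = max (-1) (min 1 (x k - \<eta> * g k))" if "k < n" for k
    using that by (simp add: y_def proj_eq_clip clip_def)
  have "g k * (y k - x k) \<le> - (y k - x k)\<^sup>2 / \<eta>" if "k < n" for k
  proof -
    have "(x k - y k) * (y k - (x k - \<eta> * g k)) \<ge> 0"
      using clip_variational_ineq[OF cube_abs_le[OF x that]] y_clip[OF that] by simp
    then have "\<eta> * (g k * (y k - x k)) \<le> - (y k - x k)\<^sup>2"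
      by (simp add: power2_eq_square algebra_simps)
    with \<open>\<eta> > 0\<close> show ?thesis
      by (simp add: field_simps)
  qed
  then have "(\<Sum>k<n. g k * (y k - x k)) \<le> - S / \<eta>"
    unfolding S_def sum_divide_distrib sum_negf[symmetric] by (intro sum_mono) auto
  moreover have "F y \<le> F x + (\<Sum>k<n. g k * (y k - x k)) + 1 / (2 * \<eta>) * S"
    unfolding S_def g_def y_def by (rule quadratic_bound) (simp add: proj_eq_clip clip_in_cube)
  moreover have "\<eta> / 2 * (vnorm n (gmap n \<eta> F x))\<^sup>2 = S / (2 * \<eta>)"
  proof -
    have "(vnorm n (gmap n \<eta> F x))\<^sup>2 = S / \<eta>\<^sup>2"
      by (simp add: vnorm_sq gmap_def S_def y_def g_def power2_commute power_divide
          sum_divide_distrib)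
    with \<open>\<eta> > 0\<close> show ?thesis
      by (simp add: power2_eq_square)
  qed
  ultimately show ?thesis
    unfolding y_def g_def by (simp add: field_simps)
qed

lemma sufficient_decrease_small_step:
  fixes a g :: "nat \<Rightarrow> real"
  assumes bounded: "\<And>t. \<bar>a t\<bar> \<le> M"
    and decrease: "\<And>t. a (Suc t) \<le> a t - c * (g t)\<^sup>2"
    and "c > 0" "\<epsilon> > 0"
  shows "\<exists>t. real t \<le> 2 * M / (c * \<epsilon>\<^sup>2) \<and> g t < \<epsilon>"
proof (rule ccontr)
  assume no_small_step: "\<not> ?thesis"
  define T where "T = nat \<lfloor>2 * M / (c * \<epsilon>\<^sup>2)\<rfloor>"
  have "0 \<le> 2 * M / (c * \<epsilon>\<^sup>2)"
    using bounded[of 0] \<open>c > 0\<close> by simp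
  then have T: "real T \<le> 2 * M / (c * \<epsilon>\<^sup>2)" "2 * M / (c * \<epsilon>\<^sup>2) < real T + 1"
    unfolding T_def by linarith+
  have "c * \<epsilon>\<^sup>2 \<le> a t - a (Suc t)" if "t < Suc T" for t
  proof -
    have "\<epsilon> \<le> g t"
      using no_small_step that T(1) by (meson less_Suc_eq_le not_le of_nat_le_iff order_trans)
    then have "c * \<epsilon>\<^sup>2 \<le> c * (g t)\<^sup>2"
      using \<open>c > 0\<close> \<open>\<epsilon> > 0\<close> by (simp add: power_mono)
    with decrease[of t] show ?thesis
      by linarith
  qed
  then have "(\<Sum>t<Suc T. c * \<epsilon>\<^sup>2) \<le> a 0 - a (Suc T)"
    unfolding sum_lessThan_telescope'[symmetric] by (intro sum_mono) auto
  also have "\<dots> \<le> 2 * M"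
    using bounded[of 0] bounded[of "Suc T"] by linarith
  finally have "(real T + 1) * (c * \<epsilon>\<^sup>2) \<le> 2 * M"
    by (simp add: add.commute)
  with T(2) \<open>c > 0\<close> \<open>\<epsilon> > 0\<close> show False
    by (simp add: field_simps)
qed

lemma pgd_small_gradient_mapping:
  fixes F :: "(nat \<Rightarrow> real) \<Rightarrow> real"
  assumes "\<eta> > 0" "\<epsilon> > 0" "x0 \<in> cube n"
    and bounded: "\<And>x. x \<in> cube n \<Longrightarrow> \<bar>F x\<bar> \<le> M"
    and quadratic_bound: "\<And>x y. x \<in> cube n \<Longrightarrow> y \<in> cube n \<Longrightarrow>
      F y \<le> F x + (\<Sum>k<n. grad n F x k * (y k - x k)) + 1 / (2 * \<eta>) * (\<Sum>k<n. (y k - x k)\<^sup>2)"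
  shows "\<exists>t. real t \<le> 4 * M / (\<eta> * \<epsilon>\<^sup>2) \<and> vnorm n (gmap n \<eta> F (pgd n \<eta> F x0 t)) < \<epsilon>"
proof -
  have "\<exists>t. real t \<le> 2 * M / (\<eta> / 2 * \<epsilon>\<^sup>2) \<and> vnorm n (gmap n \<eta> F (pgd n \<eta> F x0 t)) < \<epsilon>"
  proof (rule sufficient_decrease_small_step[where a = "\<lambda>t. F (pgd n \<eta> F x0 t)"])
    show "\<bar>F (pgd n \<eta> F x0 t)\<bar> \<le> M" for t
      by (rule bounded) (rule pgd_in_cube[OF \<open>x0 \<in> cube n\<close>])
    show "F (pgd n \<eta> F x0 (Suc t))
        \<le> F (pgd n \<eta> F x0 t) - \<eta> / 2 * (vnorm n (gmap n \<eta> F (pgd n \<eta> F x0 t)))\<^sup>2" for t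
      unfolding pgd_Suc
      by (rule pgd_step_decrease) (use assms pgd_in_cube in auto)
  qed (use assms in auto)
  then show ?thesis
    by (simp add: field_simps)
qed

definition vertex :: "nat set \<Rightarrow> nat \<Rightarrow> real" where
  "vertex B i = (if i \<in> B then -1 else 1)"

definition lagrange_basis :: "nat set \<Rightarrow> nat set \<Rightarrow> (nat \<Rightarrow> real) \<Rightarrow> real" where
  "lagrange_basis B J x = (\<Prod>i\<in>J. (1 + vertex B i * x i) / 2)"

(*
  multilin V c V is the multilinear interpolation of the values c B at the vertices vertex B,
  B \<subseteq> V. For J \<subset> V only the coordinates in J are free; partial derivatives have this shape.
*)

definition multilin :: "nat set \<Rightarrow> (nat set \<Rightarrow> real) \<Rightarrow> nat set \<Rightarrow> (nat \<Rightarrow> real) \<Rightarrow> real" where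
  "multilin V c J x = (\<Sum>B\<in>Pow V. c B * lagrange_basis B J x)"

definition partial_coef :: "(nat set \<Rightarrow> real) \<Rightarrow> nat \<Rightarrow> nat set \<Rightarrow> real" where
  "partial_coef c k B = c B * vertex B k / 2"

lemma lagrange_basis_update:
  assumes "finite J" "k \<in> J"
  shows "lagrange_basis B J (x(k := s)) = (1 + vertex B k * s) / 2 * lagrange_basis B (J - {k}) x"
proof -
  have "lagrange_basis B (J - {k}) (x(k := s)) = lagrange_basis B (J - {k}) x"
    unfolding lagrange_basis_def by (rule prod.cong) auto
  with assms show ?thesis
    unfolding lagrange_basis_def by (simp add: prod.remove)
qed

lemma multilin_update:
  assumes "finite J" "k \<in> J"
  shows "multilin V c J (x(k := s)) =
    multilin V (\<lambda>B. c B / 2) (J - {k}) x + s * multilin V (partial_coef c k) (J - {k}) x"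
  unfolding multilin_def partial_coef_def using assms
  by (simp add: lagrange_basis_update sum_distrib_left sum.distrib[symmetric] algebra_simps
      add_divide_distrib)

lemma multilin_cong: "(\<And>i. i \<in> J \<Longrightarrow> x i = x' i) \<Longrightarrow> multilin V c J x = multilin V c J x'"
  unfolding multilin_def lagrange_basis_def by (intro sum.cong refl arg_cong2[where f="(*)"] prod.cong) auto

lemma lagrange_basis_nonneg: "(\<And>i. i \<in> J \<Longrightarrow> \<bar>x i\<bar> \<le> 1) \<Longrightarrow> lagrange_basis B J x \<ge> 0"
  unfolding lagrange_basis_def vertex_def by (rule prod_nonneg) (fastforce simp: abs_le_iff)

lemma sum_lagrange_basis:
  assumes "finite V" "J \<subseteq> V"
  shows "(\<Sum>B\<in>Pow V. lagrange_basis B J x) = 2 ^ card (V - J)"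
  using assms
proof (induction V arbitrary: J rule: finite_induct)
  case empty
  then show ?case
    by (simp add: lagrange_basis_def)
next
  case (insert a V)
  have insert_a: "lagrange_basis (insert a B) (J - {a}) x = lagrange_basis B (J - {a}) x" for B
    unfolding lagrange_basis_def vertex_def by (rule prod.cong) auto
  have "(\<Sum>B\<in>Pow (insert a V). lagrange_basis B J x) =
      (\<Sum>B\<in>Pow V. lagrange_basis B J x + lagrange_basis (insert a B) J x)"
  proof -
    have "inj_on (insert a) (Pow V)"
      using insert.hyps by (meson PowD inj_on_def insert_ident subset_iff)
    with insert.hyps show ?thesis
      unfolding Pow_insert
      by (subst sum.union_disjoint) (auto simp: sum.reindex sum.distrib)
  qed
  also have "\<dots> = (\<Sum>B\<in>Pow V. (if a \<in> J then 1 else 2) * lagrange_basis B (J - {a}) x)"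
  proof (rule sum.cong[OF refl])
    fix B
    assume "B \<in> Pow V"
    with insert.hyps have "a \<notin> B"
      by auto
    have "finite J"
      using finite_subset[OF insert.prems] insert.hyps by simp
    then have "lagrange_basis B' J x = (1 + vertex B' a * x a) / 2 * lagrange_basis B' (J - {a}) x"
      if "a \<in> J" for B'
      using lagrange_basis_update[of J a B' x "x a"] that by simp
    from this[of B] this[of "insert a B"] insert_a[of B] \<open>a \<notin> B\<close>
    show "lagrange_basis B J x + lagrange_basis (insert a B) J x =
        (if a \<in> J then 1 else 2) * lagrange_basis B (J - {a}) x"
      by (cases "a \<in> J") (auto simp: vertex_def field_simps)
  qed
  also have "\<dots> = (if a \<in> J then 1 else 2) * 2 ^ card (V - (J - {a}))"
  proof -
    have "J - {a} \<subseteq> V"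
      using insert.prems by auto
    from insert.IH[OF this] show ?thesis
      by (simp flip: sum_distrib_left)
  qed
  also have "\<dots> = 2 ^ card (insert a V - J)"
  proof (cases "a \<in> J")
    case True
    with insert.hyps have "V - (J - {a}) = insert a V - J"
      by auto
    with True show ?thesis
      by simp
  next
    case False
    with insert.hyps have "insert a V - J = insert a (V - J)" "a \<notin> V - J"
      by auto
    with False insert.hyps show ?thesis
      by simp
  qed
  finally show ?case .
qed

lemma multilin_abs_le:
  assumes "finite V" "J \<subseteq> V" "\<And>i. i \<in> J \<Longrightarrow> \<bar>x i\<bar> \<le> 1" "\<And>B. \<bar>c B\<bar> \<le> K"
  shows "\<bar>multilin V c J x\<bar> \<le> K * 2 ^ card (V - J)"
proof -
  have "\<bar>multilin V c J x\<bar> \<le> (\<Sum>B\<in>Pow V. \<bar>c B * lagrange_basis B J x\<bar>)"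
    unfolding multilin_def by (rule sum_abs)
  also have "\<dots> = (\<Sum>B\<in>Pow V. \<bar>c B\<bar> * lagrange_basis B J x)"
    using lagrange_basis_nonneg[OF assms(3)] by (simp add: abs_mult)
  also have "\<dots> \<le> (\<Sum>B\<in>Pow V. K * lagrange_basis B J x)"
    by (intro sum_mono mult_right_mono assms(4) lagrange_basis_nonneg assms(3))
  also have "\<dots> = K * 2 ^ card (V - J)"
    by (simp add: sum_lagrange_basis[OF assms(1,2)] flip: sum_distrib_left)
  finally show ?thesis .
qed

lemma grad_multilin:
  assumes "k < n"
  shows "grad n (multilin {..<n} c {..<n}) x k = multilin {..<n} (partial_coef c k) ({..<n} - {k}) x"
proof -
  define a where "a = multilin {..<n} (\<lambda>B. c B / 2) ({..<n} - {k}) x"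
  define b where "b = multilin {..<n} (partial_coef c k) ({..<n} - {k}) x"
  have "(\<lambda>s. multilin {..<n} c {..<n} (x(k := s))) = (\<lambda>s. a + s * b)"
    using multilin_update[of "{..<n}" k] assms unfolding a_def b_def by auto
  moreover have "deriv (\<lambda>s. a + s * b) (x k) = b"
    by (rule DERIV_imp_deriv) (auto intro!: derivative_eq_intros)
  ultimately show ?thesis
    unfolding grad_def b_def using assms by simp
qed

definition hybrid :: "(nat \<Rightarrow> real) \<Rightarrow> (nat \<Rightarrow> real) \<Rightarrow> nat \<Rightarrow> nat \<Rightarrow> real" where
  "hybrid x y k = (\<lambda>i. if i < k then y i else x i)"

lemma multilin_hybrid_step:
  assumes "finite J" "k \<in> J"
  shows "multilin V c J (hybrid x y (Suc k)) - multilin V c J (hybrid x y k) =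
    (y k - x k) * multilin V (partial_coef c k) (J - {k}) (hybrid x y k)"
proof -
  have hybrid_upd: "(hybrid x y k)(k := y k) = hybrid x y (Suc k)" "(hybrid x y k)(k := x k) = hybrid x y k"
    by (auto simp: hybrid_def fun_eq_iff)
  from multilin_update[OF assms, of V c "hybrid x y k" "y k"]
    multilin_update[OF assms, of V c "hybrid x y k" "x k"]
  show ?thesis
    unfolding hybrid_upd by (simp add: algebra_simps)
qed

lemma multilin_hybrid_telescope:
  assumes "finite J" "{..<k} \<subseteq> J"
  shows "multilin V c J (hybrid x y k) - multilin V c J x =
    (\<Sum>j<k. (y j - x j) * multilin V (partial_coef c j) (J - {j}) (hybrid x y j))"
proof -
  have "hybrid x y 0 = x"
    by (simp add: hybrid_def)
  then have "multilin V c J (hybrid x y k) - multilin V c J x =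
      (\<Sum>j<k. multilin V c J (hybrid x y (Suc j)) - multilin V c J (hybrid x y j))"
    using sum_lessThan_telescope[of "\<lambda>j. multilin V c J (hybrid x y j)" k] by simp
  also have "\<dots> = (\<Sum>j<k. (y j - x j) * multilin V (partial_coef c j) (J - {j}) (hybrid x y j))"
    using assms by (intro sum.cong refl multilin_hybrid_step) auto
  finally show ?thesis .
qed

lemma sum_pairs_squares:
  fixes d :: "nat \<Rightarrow> real"
  shows "(\<Sum>k<n. \<Sum>j<k. (d k)\<^sup>2 + (d j)\<^sup>2) = (real n - 1) * (\<Sum>k<n. (d k)\<^sup>2)"
proof (induction n)
  case (Suc n)
  have "(\<Sum>j<n. (d n)\<^sup>2 + (d j)\<^sup>2) = real n * (d n)\<^sup>2 + (\<Sum>j<n. (d j)\<^sup>2)"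
    by (simp add: sum.distrib)
  with Suc show ?case
    by (simp add: algebra_simps)
qed simp

lemma triangular_form_le:
  fixes d :: "nat \<Rightarrow> real" and e :: "nat \<Rightarrow> nat \<Rightarrow> real"
  assumes "\<And>j k. j < k \<Longrightarrow> k < n \<Longrightarrow> \<bar>e j k\<bar> \<le> m"
  shows "(\<Sum>k<n. \<Sum>j<k. d k * d j * e j k) \<le> m * (real n - 1) / 2 * (\<Sum>k<n. (d k)\<^sup>2)"
proof -
  have "(\<Sum>k<n. \<Sum>j<k. d k * d j * e j k) \<le> (\<Sum>k<n. \<Sum>j<k. m / 2 * ((d k)\<^sup>2 + (d j)\<^sup>2))"
  proof (intro sum_mono)
    fix k j
    assume "k \<in> {..<n}" "j \<in> {..<k}"
    then have e: "\<bar>e j k\<bar> \<le> m"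
      using assms by simp
    have "d k * d j * e j k \<le> \<bar>d k * d j\<bar> * \<bar>e j k\<bar>"
      by (metis abs_ge_self abs_mult)
    also have "\<dots> \<le> \<bar>d k * d j\<bar> * m"
      using e by (simp add: mult_left_mono)
    also have "\<dots> \<le> m / 2 * ((d k)\<^sup>2 + (d j)\<^sup>2)"
    proof -
      have "0 \<le> m"
        using e abs_ge_zero[of "e j k"] by linarith
      moreover have "2 * \<bar>d k * d j\<bar> \<le> (d k)\<^sup>2 + (d j)\<^sup>2"
        using sum_squares_bound[of "\<bar>d k\<bar>" "\<bar>d j\<bar>"] by (simp add: abs_mult mult.assoc)
      ultimately have "m * (2 * \<bar>d k * d j\<bar>) \<le> m * ((d k)\<^sup>2 + (d j)\<^sup>2)"
        by (rule mult_left_mono[rotated])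
      then show ?thesis
        by (simp add: algebra_simps)
    qed
    finally show "d k * d j * e j k \<le> m / 2 * ((d k)\<^sup>2 + (d j)\<^sup>2)" .
  qed
  also have "\<dots> = m * (real n - 1) / 2 * (\<Sum>k<n. (d k)\<^sup>2)"
    by (simp only: sum_pairs_squares flip: sum_distrib_left) simp
  finally show ?thesis .
qed

lemma multilin_quadratic_upper_bound:
  assumes c: "\<And>B. \<bar>c B\<bar> \<le> m"
    and x: "\<And>i. i < n \<Longrightarrow> \<bar>x i\<bar> \<le> 1" and y: "\<And>i. i < n \<Longrightarrow> \<bar>y i\<bar> \<le> 1"
  shows "multilin {..<n} c {..<n} y - multilin {..<n} c {..<n} x
      - (\<Sum>k<n. (y k - x k) * multilin {..<n} (partial_coef c k) ({..<n} - {k}) x)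
    \<le> m * (real n - 1) / 2 * (\<Sum>k<n. (y k - x k)\<^sup>2)"
proof -
  define V where "V = {..<n}"
  define D where "D k w = multilin V (partial_coef c k) (V - {k}) w" for k w
  define E where "E j k w = multilin V (partial_coef (partial_coef c k) j) (V - {k} - {j}) w" for j k w
  have first_order: "multilin V c V y - multilin V c V x = (\<Sum>k<n. (y k - x k) * D k (hybrid x y k))"
  proof -
    have "multilin V c V y = multilin V c V (hybrid x y n)"
      by (rule multilin_cong) (simp add: V_def hybrid_def)
    then show ?thesis
      unfolding D_def using multilin_hybrid_telescope[of V n] by (simp add: V_def)
  qed
  have second_order: "D k (hybrid x y k) - D k x = (\<Sum>j<k. (y j - x j) * E j k (hybrid x y j))"
    if "k < n" for k
    unfolding D_def E_def using that by (intro multilin_hybrid_telescope) (auto simp: V_def)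
  have E_bound: "\<bar>E j k (hybrid x y j)\<bar> \<le> m" if "j < k" "k < n" for j k
  proof -
    have "\<bar>E j k (hybrid x y j)\<bar> \<le> m / 4 * 2 ^ card (V - (V - {k} - {j}))"
      unfolding E_def
    proof (rule multilin_abs_le)
      show "\<bar>partial_coef (partial_coef c k) j B\<bar> \<le> m / 4" for B
        using c[of B] by (simp add: partial_coef_def vertex_def abs_mult)
    qed (use x y in \<open>auto simp: V_def hybrid_def\<close>)
    also have "V - (V - {k} - {j}) = {j, k}"
      using that by (auto simp: V_def)
    finally show ?thesis
      using that by simp
  qed
  have "multilin V c V y - multilin V c V x - (\<Sum>k<n. (y k - x k) * D k x) =
      (\<Sum>k<n. (y k - x k) * (D k (hybrid x y k) - D k x))"
    unfolding first_order by (simp add: right_diff_distrib sum_subtractf)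
  also have "\<dots> = (\<Sum>k<n. \<Sum>j<k. (y k - x k) * (y j - x j) * E j k (hybrid x y j))"
    by (intro sum.cong refl) (simp add: second_order sum_distrib_left mult.assoc)
  also have "\<dots> \<le> m * (real n - 1) / 2 * (\<Sum>k<n. (y k - x k)\<^sup>2)"
    by (rule triangular_form_le) (rule E_bound)
  finally show ?thesis
    unfolding V_def D_def .
qed

lemma FE_eq_multilin: "FE n c x = multilin {..<n} (\<lambda>B. cval c (pt n B)) {..<n} x"
proof -
  have "FE n c x = (\<Sum>S\<in>Pow {..<n}. \<Sum>B\<in>Pow {..<n}.
      (cval c (pt n B) / 2 ^ n) * (\<Prod>i\<in>S. pt n B i * x i))"
    unfolding FE_def fcoef_def
    by (simp add: sum_distrib_right sum_divide_distrib prod.distrib mult.assoc)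
  also have "\<dots> = (\<Sum>B\<in>Pow {..<n}. (cval c (pt n B) / 2 ^ n) * (\<Sum>S\<in>Pow {..<n}. \<Prod>i\<in>S. pt n B i * x i))"
    by (subst sum.swap) (simp add: sum_distrib_left)
  also have "\<dots> = multilin {..<n} (\<lambda>B. cval c (pt n B)) {..<n} x"
    unfolding multilin_def
  proof (rule sum.cong[OF refl])
    fix B
    have "(\<Sum>S\<in>Pow {..<n}. \<Prod>i\<in>S. pt n B i * x i) = (\<Prod>i<n. pt n B i * x i + 1)"
      using prod_add[of "{..<n}" "\<lambda>i. pt n B i * x i" "\<lambda>_. 1"] by simp
    also have "\<dots> = (\<Prod>i<n. 2 * ((1 + vertex B i * x i) / 2))"
      by (intro prod.cong) (auto simp: pt_def vertex_def)
    also have "\<dots> = 2 ^ n * lagrange_basis B {..<n} x"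
      by (simp only: lagrange_basis_def prod.distrib) simp
    finally show "cval c (pt n B) / 2 ^ n * (\<Sum>S\<in>Pow {..<n}. \<Prod>i\<in>S. pt n B i * x i) =
        cval c (pt n B) * lagrange_basis B {..<n} x"
      by simp
  qed
  finally show ?thesis .
qed

lemma Fsum_eq_multilin: "Fsum n f = multilin {..<n} (\<lambda>B. \<Sum>c\<leftarrow>f. cval c (pt n B)) {..<n}"
  unfolding Fsum_def fun_eq_iff
  by (induction f) (simp_all add: FE_eq_multilin multilin_def sum.distrib distrib_right)

lemma abs_sum_list_cval_le: "\<bar>\<Sum>c\<leftarrow>f. cval c y\<bar> \<le> real (length f)"
proof (induction f)
  case (Cons c f)
  have "\<bar>cval c y\<bar> \<le> 1"
    by (simp add: cval_def)
  with Cons show ?case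
    by (simp add: abs_triangle_ineq order_trans[OF abs_triangle_ineq])
qed simp

lemma abs_Fsum_le:
  assumes "x \<in> cube n"
  shows "\<bar>Fsum n f x\<bar> \<le> real (length f)"
proof -
  have "\<bar>Fsum n f x\<bar> \<le> real (length f) * 2 ^ card ({..<n} - {..<n})"
    unfolding Fsum_eq_multilin
    by (rule multilin_abs_le) (simp_all add: cube_abs_le[OF assms] abs_sum_list_cval_le)
  then show ?thesis
    by simp
qed

lemma Fsum_quadratic_upper_bound:
  assumes "x \<in> cube n" "y \<in> cube n"
  shows "Fsum n f y \<le> Fsum n f x + (\<Sum>k<n. grad n (Fsum n f) x k * (y k - x k))
    + real n * real (length f) / 2 * (\<Sum>k<n. (y k - x k)\<^sup>2)"
proof -
  have "Fsum n f y - Fsum n f x - (\<Sum>k<n. (y k - x k) * grad n (Fsum n f) x k)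
      \<le> real (length f) * (real n - 1) / 2 * (\<Sum>k<n. (y k - x k)\<^sup>2)"
    unfolding Fsum_eq_multilin
    using multilin_quadratic_upper_bound[OF abs_sum_list_cval_le cube_abs_le[OF assms(1)] cube_abs_le[OF assms(2)]]
    by (simp add: grad_multilin)
  moreover have "real (length f) * (real n - 1) / 2 * (\<Sum>k<n. (y k - x k)\<^sup>2)
      \<le> real n * real (length f) / 2 * (\<Sum>k<n. (y k - x k)\<^sup>2)"
    by (intro mult_right_mono) (auto simp: sum_nonneg algebra_simps)
  ultimately show ?thesis
    by (simp add: mult.commute)
qed

lemma pgd_Fsum_small_gradient_mapping:
  assumes "n > 0" "f \<noteq> []" "x0 \<in> cube n" "\<epsilon> > 0"
  defines "\<eta> \<equiv> 1 / (real n * real (length f))"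
  shows "\<exists>t. real t \<le> 4 * real n * (real (length f))\<^sup>2 / \<epsilon>\<^sup>2 \<and>
    vnorm n (gmap n \<eta> (Fsum n f) (pgd n \<eta> (Fsum n f) x0 t)) < \<epsilon>"
proof -
  define m where "m = real (length f)"
  have "\<eta> > 0" and scale: "1 / (2 * \<eta>) = real n * m / 2"
    and bound: "4 * m / (\<eta> * \<epsilon>\<^sup>2) = 4 * real n * m\<^sup>2 / \<epsilon>\<^sup>2"
    using assms by (auto simp: m_def power2_eq_square)
  have "\<exists>t. real t \<le> 4 * m / (\<eta> * \<epsilon>\<^sup>2) \<and> vnorm n (gmap n \<eta> (Fsum n f) (pgd n \<eta> (Fsum n f) x0 t)) < \<epsilon>"
  proof (rule pgd_small_gradient_mapping[OF \<open>\<eta> > 0\<close> \<open>\<epsilon> > 0\<close> \<open>x0 \<in> cube n\<close>])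
    show "\<bar>Fsum n f x\<bar> \<le> m" if "x \<in> cube n" for x
      unfolding m_def using that by (rule abs_Fsum_le)
    show "Fsum n f y \<le> Fsum n f x + (\<Sum>k<n. grad n (Fsum n f) x k * (y k - x k))
        + 1 / (2 * \<eta>) * (\<Sum>k<n. (y k - x k)\<^sup>2)" if "x \<in> cube n" "y \<in> cube n" for x y
      unfolding scale m_def using that by (rule Fsum_quadratic_upper_bound)
  qed
  with bound show ?thesis
    unfolding m_def by simp
qed

theorem theorem8:
  shows "\<exists>C>0. \<forall>(n::nat) (f::clause list) (x0::nat \<Rightarrow> real) (\<epsilon>::real).
     (\<forall>c\<in>set f. clause_vars c \<subseteq> {..<n}) \<longrightarrow> x0 \<in> cube n \<longrightarrow> \<epsilon> > 0 \<longrightarrow>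
     (let m = length f; \<eta> = 1 / (real n * real m); F = Fsum n f in
      \<exists>t::nat. real t \<le> C * real n * (real m)\<^sup>2 / \<epsilon>\<^sup>2 \<and>
               vnorm n (gmap n \<eta> F (pgd n \<eta> F x0 t)) < \<epsilon>)"
proof (rule exI[of _ 4], intro conjI allI impI)
  fix n :: nat and f :: "clause list" and x0 :: "nat \<Rightarrow> real" and \<epsilon> :: real
  assume x0: "x0 \<in> cube n" and "\<epsilon> > 0"
  show "let m = length f; \<eta> = 1 / (real n * real m); F = Fsum n f in
      \<exists>t. real t \<le> 4 * real n * (real m)\<^sup>2 / \<epsilon>\<^sup>2 \<and> vnorm n (gmap n \<eta> F (pgd n \<eta> F x0 t)) < \<epsilon>"
  proof (cases "n = 0 \<or> f = []")
    case True
    \<comment> \<open>Then \<eta> = 1/0 = 0, and gmap scales by 1/\<eta> = 0, so the gradient mapping vanishes.\<close>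
    with \<open>\<epsilon> > 0\<close> show ?thesis
      unfolding Let_def by (intro exI[of _ 0]) (auto simp: gmap_def vnorm_def)
  next
    case False
    with pgd_Fsum_small_gradient_mapping[OF _ _ x0 \<open>\<epsilon> > 0\<close>] show ?thesis
      by (simp add: Let_def)
  qed
qed simp

end
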